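(* Let $n\ge 2$ be an integer and $A\subseteq L_n$. Then $(X_n,\tau(A))$ is perfect (respectively Lindelöf, respectively $\sigma$-compact) if and only if the subspace $(L_n,\tau(A)|_{L_n})$ is perfect (respectively Lindelöf, respectively $\sigma$-compact).
   Context: For $\overline{x},\overline{a}\in\mathbb R^n$ let $|\overline{x}-\overline{a}|$ be the Euclidean distance and $B(\overline{a},\epsilon)=\{\overline{x}\in\mathbb R^n:|\overline{x}-\overline{a}|<\epsilon\}$. Let $P_n=\{\overline{x}\in\mathbb R^n: x_n>0\}$, $L_n=\{\overline{x}\in\mathbb R^n: x_n=0\}$, $X_n=P_n\cup L_n$. For $\overline{a}\in L_n$ and $\epsilon>0$ put $\overline{a(\epsilon)}=(a_1,\dots,a_{n-1},\epsilon)$ and $\tilde B(\overline{a},\epsilon)=\{\overline{a}\}\cup B(\overline{a(\epsilon)},\epsilon)$. For $A\subseteq L_n$, the topology $\tau(A)$ on $X_n$ is generated by the local bases: at $\overline{a}\in P_n$, the sets $B(\overline{a},\epsilon)$ with $0<\epsilon<a_n$; at $\overline{a}\in A$, the sets $B(\overline{a},\epsilon)\cap X_n$ with $\epsilon>0$; at $\overline{a}\in L_n\setminus A$, the sets $\tilde B(\overline{a},\epsilon)$ with $\epsilon>0$. A space is perfect if every closed set is a $G_\delta$-set. *)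

theory Defs
  imports "HOL-Analysis.Analysis"
begin

text \<open>We model R^n (n \<ge> 2) as (real^'m) \<times> real, where CARD('m) = n - 1 \<ge> 1;
  the last coordinate x_n is the second component. The product metric on this
  type is the Euclidean distance.\<close>

definition Pn :: "((real^'m) \<times> real) set" where
  "Pn = {p. snd p > 0}"

definition Ln :: "((real^'m) \<times> real) set" where
  "Ln = {p. snd p = 0}"

definition Xn :: "((real^'m) \<times> real) set" where
  "Xn = Pn \<union> Ln"

text \<open>The basic neighbourhood of radius e at a point a (for a in Pn it is only
  used with 0 < e < a_n).\<close>
definition basic_nbhd :: "((real^'m) \<times> real) set \<Rightarrow> (real^'m) \<times> real \<Rightarrow> real \<Rightarrow> ((real^'m) \<times> real) set" where
  "basic_nbhd A a e =
     (if a \<in> Pn then ball a e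
      else if a \<in> A then ball a e \<inter> Xn
      else insert a (ball (fst a, e) e))"

definition tauA :: "((real^'m) \<times> real) set \<Rightarrow> ((real^'m) \<times> real) topology" where
  "tauA A = topology (\<lambda>U. U \<subseteq> Xn \<and>
      (\<forall>a\<in>U. \<exists>e>0. (a \<in> Pn \<longrightarrow> e < snd a) \<and> basic_nbhd A a e \<subseteq> U))"

definition perfect_top :: "'a topology \<Rightarrow> bool" where
  "perfect_top X \<longleftrightarrow> (\<forall>S. closedin X S \<longrightarrow> gdelta_in X S)"

definition sigma_compact_top :: "'a topology \<Rightarrow> bool" where
  "sigma_compact_top X \<longleftrightarrow> (countable union_of compactin X) (topspace X)"

end

theory Submission
  imports Defs
begin

text \<open>\<open>P\<^sub>n\<close> is open in \<open>\<tau>(A)\<close> and carries its Euclidean topology, so as a subspace it is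
  metrizable and \<open>\<sigma>\<close>-compact; \<open>L\<^sub>n\<close> is closed and, being the intersection of the open strips
  \<open>{x \<in> X\<^sub>n. x\<^sub>n < 1/k}\<close>, a \<open>G\<^sub>\<delta>\<close>-set. All three properties pass to closed subspaces; conversely,
  if a space is the union of a closed \<open>G\<^sub>\<delta>\<close>-set with the property and of its metrizable
  \<open>\<sigma>\<close>-compact complement, then the whole space has the property: closed sets meet both pieces
  in \<open>G\<^sub>\<delta>\<close>-sets, and countable covers can be chosen on each piece separately.\<close>

lemma perfect_top_subtopology:
  assumes "perfect_top X"
  shows "perfect_top (subtopology X S)"
  unfolding perfect_top_def
proof (intro allI impI)
  fix C assume "closedin (subtopology X S) C"
  then obtain F where "closedin X F" "C = F \<inter> S"
    by (auto simp: closedin_subtopology)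
  then show "gdelta_in (subtopology X S) C"
    using assms by (auto simp: perfect_top_def gdelta_in_subtopology)
qed

lemma perfect_top_Un_gdelta:
  assumes "topspace X = S \<union> T" "gdelta_in X S" "gdelta_in X T"
    and "perfect_top (subtopology X S)" "perfect_top (subtopology X T)"
  shows "perfect_top X"
  unfolding perfect_top_def
proof (intro allI impI)
  fix F assume F: "closedin X F"
  have "gdelta_in X (F \<inter> U)" if U: "gdelta_in X U" "perfect_top (subtopology X U)" for U
  proof -
    have "closedin (subtopology X U) (F \<inter> U)"
      using F by (auto simp: closedin_subtopology)
    then have "gdelta_in (subtopology X U) (F \<inter> U)"
      using U(2) by (simp add: perfect_top_def)
    then show ?thesis
      using gdelta_in_gdelta_subtopology[OF U(1)] by blast
  qed
  then have "gdelta_in X (F \<inter> S \<union> F \<inter> T)"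
    using assms by (simp add: gdelta_in_Un)
  moreover have "F \<inter> S \<union> F \<inter> T = F"
    using closedin_subset[OF F] assms(1) by auto
  ultimately show "gdelta_in X F" by simp
qed

lemma metrizable_imp_perfect_top: "metrizable_space X \<Longrightarrow> perfect_top X"
  by (simp add: perfect_top_def closed_imp_gdelta_in)

lemma sigma_compact_top_closedin_subtopology:
  assumes "sigma_compact_top X" "closedin X S"
  shows "sigma_compact_top (subtopology X S)"
proof -
  obtain \<U> where \<U>: "countable \<U>" "\<And>U. U \<in> \<U> \<Longrightarrow> compactin X U" "\<Union>\<U> = topspace X"
    using assms(1) by (auto simp: sigma_compact_top_def union_of_def)
  show ?thesis
    unfolding sigma_compact_top_def union_of_def
  proof (intro exI[of _ "(\<lambda>U. S \<inter> U) ` \<U>"] conjI)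
    show "(\<lambda>U. S \<inter> U) ` \<U> \<subseteq> Collect (compactin (subtopology X S))"
      using \<U>(2) closed_Int_compactin[OF assms(2)] by (auto simp: compactin_subtopology)
  qed (use \<U> in auto)
qed

lemma sigma_compact_top_Un:
  assumes "topspace X = S \<union> T"
    and "sigma_compact_top (subtopology X S)" "sigma_compact_top (subtopology X T)"
  shows "sigma_compact_top X"
proof -
  have "(countable union_of compactin X) (topspace X \<inter> U)"
    if "sigma_compact_top (subtopology X U)" for U
    using that unfolding sigma_compact_top_def
    by (auto simp: compactin_subtopology elim: union_of_mono)
  then have "(countable union_of compactin X) (topspace X \<inter> S \<union> topspace X \<inter> T)"
    using assms(2,3) by (simp add: countable_union_of_Un)
  then show ?thesis
    using assms(1) by (simp add: sigma_compact_top_def Int_Un_distrib[symmetric])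
qed

lemma sigma_compact_imp_Lindelof_space:
  assumes "sigma_compact_top X"
  shows "Lindelof_space X"
proof -
  obtain \<U> where \<U>: "countable \<U>" "\<And>U. U \<in> \<U> \<Longrightarrow> compactin X U" "\<Union>\<U> = topspace X"
    using assms by (auto simp: sigma_compact_top_def union_of_def)
  then have "Lindelof_space (subtopology X (\<Union>\<U>))"
    by (intro Lindelof_space_Union compact_imp_Lindelof_space compact_space_subtopology)
  then show ?thesis
    by (simp add: \<U>(3))
qed

lemma sigma_compact_top_open_euclidean:
  fixes S :: "'a::euclidean_space set"
  assumes "open S"
  shows "sigma_compact_top (top_of_set S)"
proof -
  obtain C :: "nat \<Rightarrow> 'a set" where "\<And>n. compact (C n)" "\<And>n. C n \<subseteq> S" "\<Union>(range C) = S"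
    using open_Union_compact_subsets[OF assms] by metis
  then show ?thesis
    unfolding sigma_compact_top_def union_of_def
    by (intro exI[of _ "range C"] conjI) (auto simp: compactin_subtopology)
qed

lemma perfect_top_iff_closed_gdelta_subtopology:
  assumes "closedin X L" "gdelta_in X L"
    and "metrizable_space (subtopology X (topspace X - L))"
  shows "perfect_top X \<longleftrightarrow> perfect_top (subtopology X L)"
proof
  show "perfect_top (subtopology X L)" if "perfect_top X"
    using that by (rule perfect_top_subtopology)
  show "perfect_top X" if "perfect_top (subtopology X L)"
  proof (rule perfect_top_Un_gdelta)
    show "topspace X = L \<union> (topspace X - L)"
      using closedin_subset[OF assms(1)] by auto
    show "gdelta_in X (topspace X - L)"
      using assms(1) by (intro open_imp_gdelta_in) auto
  qed (use assms that metrizable_imp_perfect_top in auto)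
qed

lemma Lindelof_space_iff_closedin_subtopology:
  assumes "closedin X L" "Lindelof_space (subtopology X (topspace X - L))"
  shows "Lindelof_space X \<longleftrightarrow> Lindelof_space (subtopology X L)"
proof
  show "Lindelof_space (subtopology X L)" if "Lindelof_space X"
    using that assms(1) by (rule Lindelof_space_closedin_subtopology)
  show "Lindelof_space X" if "Lindelof_space (subtopology X L)"
  proof -
    have "Lindelof_space (subtopology X (\<Union>{L, topspace X - L}))"
      using that assms(2) by (intro Lindelof_space_Union) auto
    moreover have "\<Union>{L, topspace X - L} = topspace X"
      using closedin_subset[OF assms(1)] by auto
    ultimately show ?thesis by simp
  qed
qed

lemma sigma_compact_top_iff_closedin_subtopology:
  assumes "closedin X L" "sigma_compact_top (subtopology X (topspace X - L))"
  shows "sigma_compact_top X \<longleftrightarrow> sigma_compact_top (subtopology X L)"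
proof
  show "sigma_compact_top (subtopology X L)" if "sigma_compact_top X"
    using that assms(1) by (rule sigma_compact_top_closedin_subtopology)
  show "sigma_compact_top X" if "sigma_compact_top (subtopology X L)"
    using closedin_subset[OF assms(1)] that assms(2)
    by (intro sigma_compact_top_Un[of X L "topspace X - L"]) auto
qed

lemma abs_snd_diff_le_dist:
  fixes p q :: "'a::metric_space \<times> real"
  shows "\<bar>snd p - snd q\<bar> \<le> dist p q"
  using dist_snd_le[of p q] by (simp add: dist_real_def)

lemma tangent_ball_mono:
  fixes x :: "'a::metric_space"
  assumes "e1 \<le> e2"
  shows "ball (x, e1) e1 \<subseteq> ball (x, e2) e2"
proof
  fix p assume "p \<in> ball (x, e1) e1"
  moreover have "dist (x, e2) p \<le> dist (x, e2) (x, e1) + dist (x, e1) p"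
    by (rule dist_triangle)
  moreover have "dist (x, e2) (x, e1) = e2 - e1"
    using assms by (simp add: dist_Pair_Pair dist_real_def)
  ultimately show "p \<in> ball (x, e2) e2" by simp
qed

lemma basic_nbhd_mono: "e1 \<le> e2 \<Longrightarrow> basic_nbhd A a e1 \<subseteq> basic_nbhd A a e2"
  unfolding basic_nbhd_def using tangent_ball_mono[of e1 e2 "fst a"] by auto

lemma basic_nbhd_subset_strip:
  assumes "a \<in> Xn" "0 < e" "a \<in> Pn \<Longrightarrow> e \<le> snd a"
  shows "basic_nbhd A a e \<subseteq> {p \<in> Xn. snd p < snd a + 2 * e}"
proof
  fix p assume p: "p \<in> basic_nbhd A a e"
  consider "a \<in> Pn" | "a \<notin> Pn" "a \<in> A" | "a \<notin> Pn" "a \<notin> A" by blast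
  then have "p \<in> Xn \<and> snd p < snd a + 2 * e"
  proof cases
    case 1
    then have "\<bar>snd a - snd p\<bar> < e"
      using p abs_snd_diff_le_dist[of a p] by (simp add: basic_nbhd_def)
    then show ?thesis
      using 1 assms by (auto simp: Xn_def Pn_def)
  next
    case 2
    then have "\<bar>snd a - snd p\<bar> < e" "p \<in> Xn"
      using p abs_snd_diff_le_dist[of a p] by (auto simp: basic_nbhd_def)
    then show ?thesis by simp
  next
    case 3
    then have "snd a = 0" "p = a \<or> \<bar>snd p - e\<bar> < e"
      using assms(1) p abs_snd_diff_le_dist[of p "(fst a, e)"]
      by (auto simp: basic_nbhd_def Xn_def Pn_def Ln_def dist_commute)
    then show ?thesis
      using assms(1,2) by (auto simp: Xn_def Pn_def Ln_def)
  qed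
  then show "p \<in> {p \<in> Xn. snd p < snd a + 2 * e}" by simp
qed

lemma istopology_tauA:
  fixes A :: "((real^'m) \<times> real) set"
  shows "istopology (\<lambda>U. U \<subseteq> Xn \<and>
      (\<forall>a\<in>U. \<exists>e>0. (a \<in> Pn \<longrightarrow> e < snd a) \<and> basic_nbhd A a e \<subseteq> U))"
  unfolding istopology_def
proof (rule conjI; intro allI impI conjI ballI)
  fix S T a
  assume S: "S \<subseteq> Xn \<and> (\<forall>a\<in>S. \<exists>e>0. (a \<in> Pn \<longrightarrow> e < snd a) \<and> basic_nbhd A a e \<subseteq> S)"
    and T: "T \<subseteq> Xn \<and> (\<forall>a\<in>T. \<exists>e>0. (a \<in> Pn \<longrightarrow> e < snd a) \<and> basic_nbhd A a e \<subseteq> T)"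
    and a: "a \<in> S \<inter> T"
  obtain e1 where "e1 > 0" "a \<in> Pn \<longrightarrow> e1 < snd a" "basic_nbhd A a e1 \<subseteq> S"
    using S a by blast
  moreover obtain e2 where "e2 > 0" "a \<in> Pn \<longrightarrow> e2 < snd a" "basic_nbhd A a e2 \<subseteq> T"
    using T a by blast
  ultimately show "\<exists>e>0. (a \<in> Pn \<longrightarrow> e < snd a) \<and> basic_nbhd A a e \<subseteq> S \<inter> T"
    using basic_nbhd_mono[of "min e1 e2" e1 A a] basic_nbhd_mono[of "min e1 e2" e2 A a]
    by (intro exI[of _ "min e1 e2"]) auto
next
  fix K a
  assume K: "\<forall>U\<in>K. U \<subseteq> Xn \<and>
      (\<forall>a\<in>U. \<exists>e>0. (a \<in> Pn \<longrightarrow> e < snd a) \<and> basic_nbhd A a e \<subseteq> U)"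
    and a: "a \<in> \<Union>K"
  then obtain U e where "U \<in> K" "e > 0" "a \<in> Pn \<longrightarrow> e < snd a" "basic_nbhd A a e \<subseteq> U"
    by blast
  then show "\<exists>e>0. (a \<in> Pn \<longrightarrow> e < snd a) \<and> basic_nbhd A a e \<subseteq> \<Union>K"
    by blast
qed auto

lemma openin_tauA:
  "openin (tauA A) U \<longleftrightarrow> U \<subseteq> Xn \<and>
      (\<forall>a\<in>U. \<exists>e>0. (a \<in> Pn \<longrightarrow> e < snd a) \<and> basic_nbhd A a e \<subseteq> U)"
  by (simp add: tauA_def istopology_tauA)

lemma openin_tauA_strip:
  fixes A :: "((real^'m) \<times> real) set"
  assumes "0 < r"
  shows "openin (tauA A) {p \<in> Xn. snd p < r}"
  unfolding openin_tauA
proof (intro conjI ballI)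
  fix a :: "(real^'m) \<times> real" assume a: "a \<in> {p \<in> Xn. snd p < r}"
  define e where "e = (if a \<in> Pn then min (snd a / 2) ((r - snd a) / 2) else (r - snd a) / 2)"
  have e: "0 < e" "a \<in> Pn \<longrightarrow> e < snd a" "snd a + 2 * e \<le> r"
    using a by (auto simp: e_def Pn_def min_def field_simps)
  have "basic_nbhd A a e \<subseteq> {p \<in> Xn. snd p < snd a + 2 * e}"
    using a e by (intro basic_nbhd_subset_strip) auto
  also have "\<dots> \<subseteq> {p \<in> Xn. snd p < r}"
    using e(3) by auto
  finally show "\<exists>e>0. (a \<in> Pn \<longrightarrow> e < snd a) \<and> basic_nbhd A a e \<subseteq> {p \<in> Xn. snd p < r}"
    using e by blast
qed auto

lemma topspace_tauA:
  fixes A :: "((real^'m) \<times> real) set"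
  shows "topspace (tauA A) = Xn"
proof
  show "topspace (tauA A) \<subseteq> Xn"
    using openin_topspace[of "tauA A"] unfolding openin_tauA by blast
  show "Xn \<subseteq> topspace (tauA A)"
  proof
    fix p :: "(real^'m) \<times> real" assume p: "p \<in> Xn"
    then have "openin (tauA A) {q \<in> Xn. snd q < snd p + 1}"
      by (intro openin_tauA_strip) (auto simp: Xn_def Pn_def Ln_def)
    moreover have "p \<in> {q \<in> Xn. snd q < snd p + 1}"
      using p by simp
    ultimately show "p \<in> topspace (tauA A)"
      by (meson openin_subset subsetD)
  qed
qed

lemma open_Pn: "open (Pn :: ((real^'m) \<times> real) set)"
  unfolding Pn_def by (intro open_Collect_less continuous_intros)

lemma openin_tauA_iff_open:
  fixes A :: "((real^'m) \<times> real) set"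
  assumes "U \<subseteq> Pn"
  shows "openin (tauA A) U \<longleftrightarrow> open U"
proof
  assume U: "openin (tauA A) U"
  have "\<exists>e>0. ball a e \<subseteq> U" if a: "a \<in> U" for a
  proof -
    obtain e where "0 < e" "basic_nbhd A a e \<subseteq> U"
      using U a unfolding openin_tauA by blast
    moreover have "a \<in> Pn"
      using a assms by blast
    ultimately show ?thesis
      by (auto simp: basic_nbhd_def)
  qed
  then show "open U"
    by (simp add: open_contains_ball)
next
  assume "open U"
  have "\<exists>e>0. (a \<in> Pn \<longrightarrow> e < snd a) \<and> basic_nbhd A a e \<subseteq> U" if a: "a \<in> U" for a
  proof -
    obtain e where "0 < e" "ball a e \<subseteq> U"
      using \<open>open U\<close> a open_contains_ball by blast
    moreover have "a \<in> Pn" "0 < snd a"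
      using a assms by (auto simp: Pn_def)
    ultimately show ?thesis
      by (intro exI[of _ "min e (snd a / 2)"]) (auto simp: basic_nbhd_def)
  qed
  then show "openin (tauA A) U"
    using assms by (auto simp: openin_tauA Xn_def)
qed

lemma subtopology_tauA_Pn:
  fixes A :: "((real^'m) \<times> real) set"
  shows "subtopology (tauA A) Pn = top_of_set Pn"
proof -
  have Pn: "openin (tauA A) Pn"
    using open_Pn by (simp add: openin_tauA_iff_open)
  have "openin (subtopology (tauA A) Pn) S \<longleftrightarrow> openin (top_of_set Pn) S" for S
  proof -
    have "openin (subtopology (tauA A) Pn) S \<longleftrightarrow> openin (tauA A) S \<and> S \<subseteq> Pn"
      by (rule openin_open_subtopology[OF Pn])
    also have "\<dots> \<longleftrightarrow> open S \<and> S \<subseteq> Pn"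
      using openin_tauA_iff_open by blast
    also have "\<dots> \<longleftrightarrow> openin (top_of_set Pn) S"
      by (simp add: openin_open_eq[OF open_Pn])
    finally show ?thesis .
  qed
  then show ?thesis
    by (simp add: topology_eq)
qed

lemma topspace_tauA_Diff_Ln:
  fixes A :: "((real^'m) \<times> real) set"
  shows "topspace (tauA A) - Ln = Pn"
  by (auto simp: topspace_tauA Xn_def Pn_def Ln_def)

lemma closedin_tauA_Ln:
  fixes A :: "((real^'m) \<times> real) set"
  shows "closedin (tauA A) Ln"
proof -
  have "Ln \<subseteq> topspace (tauA A)"
    by (auto simp: topspace_tauA Xn_def)
  moreover have "openin (tauA A) (topspace (tauA A) - Ln)"
    using open_Pn by (simp add: topspace_tauA_Diff_Ln openin_tauA_iff_open)
  ultimately show ?thesis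
    by (simp add: closedin_def)
qed

lemma gdelta_in_tauA_Ln:
  fixes A :: "((real^'m) \<times> real) set"
  shows "gdelta_in (tauA A) Ln"
proof -
  have "(Ln :: ((real^'m) \<times> real) set) = (\<Inter>k. {p \<in> Xn. snd p < inverse (Suc k)})"
  proof (intro equalityI subsetI)
    fix p assume p: "p \<in> (\<Inter>k. {p \<in> Xn. snd p < inverse (Suc k)})"
    show "p \<in> Ln"
    proof (rule ccontr)
      assume "p \<notin> Ln"
      then have "0 < snd p"
        using p by (auto simp: Xn_def Pn_def)
      then obtain k where "inverse (Suc k) < snd p"
        using reals_Archimedean by blast
      moreover have "snd p < inverse (Suc k)"
        using p by blast
      ultimately show False
        by linarith
    qed
  qed (auto simp: Ln_def Xn_def)
  also have "gdelta_in (tauA A) \<dots>"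
  proof (intro gdelta_in_Inter open_imp_gdelta_in)
    show "openin (tauA A) S" if "S \<in> range (\<lambda>k. {p \<in> Xn. snd p < inverse (Suc k)})" for S
      using that by (auto intro!: openin_tauA_strip)
  qed auto
  finally show ?thesis .
qed

theorem mainTheorem4:
  fixes A :: "((real^'m) \<times> real) set"
  assumes "A \<subseteq> Ln"
  shows "(perfect_top (tauA A) \<longleftrightarrow> perfect_top (subtopology (tauA A) Ln))
       \<and> (Lindelof_space (tauA A) \<longleftrightarrow> Lindelof_space (subtopology (tauA A) Ln))
       \<and> (sigma_compact_top (tauA A) \<longleftrightarrow> sigma_compact_top (subtopology (tauA A) Ln))"
proof -
  have metrizable: "metrizable_space (subtopology (tauA A) (topspace (tauA A) - Ln))"
    by (simp add: topspace_tauA_Diff_Ln subtopology_tauA_Pn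
        metrizable_space_subtopology metrizable_space_euclidean)
  have sigma_compact: "sigma_compact_top (subtopology (tauA A) (topspace (tauA A) - Ln))"
    by (simp add: topspace_tauA_Diff_Ln subtopology_tauA_Pn
        sigma_compact_top_open_euclidean open_Pn)
  show ?thesis
    using perfect_top_iff_closed_gdelta_subtopology[OF closedin_tauA_Ln gdelta_in_tauA_Ln metrizable]
      Lindelof_space_iff_closedin_subtopology[OF closedin_tauA_Ln
        sigma_compact_imp_Lindelof_space[OF sigma_compact]]
      sigma_compact_top_iff_closedin_subtopology[OF closedin_tauA_Ln sigma_compact]
    by blast
qed

end
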